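(* Let $\mathcal{H}$ be a Hilbert space, $\mathcal{H}_1$ a closed subspace with $\{0\}\ne\mathcal{H}_1\ne\mathcal{H}$, $P:\mathcal{H}\to\mathcal{H}_1$ the orthogonal projection onto $\mathcal{H}_1$ (so $P^*:\mathcal{H}_1\to\mathcal{H}$ is the inclusion), $Q:\mathcal{H}\to\mathcal{H}_1^\perp$ the orthogonal projection onto $\mathcal{H}_1^\perp$, $H\ge 0$ a bounded selfadjoint operator on $\mathcal{H}$, and $H_t:=H+tQ^*Q$ for $t\ge0$. Then for $t\ge 2\|H+1\|^2$, $$\left\|(H_t+1)^{-1}-P^*(PHP^*+1)^{-1}P\right\|\le \frac{4\|H+1\|^2}{1+t}.$$ *)

theory Defs
  imports "HOL-Analysis.Analysis"
begin

text \<open>Orthogonal projection onto a (closed) subspace S of a real Hilbert space,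
  viewed as an operator on the whole space (i.e. P^* P where P maps onto S).\<close>
definition orth_proj :: "'a::real_inner set \<Rightarrow> 'a \<Rightarrow> 'a" where
  "orth_proj S x = (THE y. y \<in> S \<and> x - y \<in> orthogonal_comp S)"

text \<open>The operator P^* (P H P^* + 1)^{-1} P on the whole space: P x is mapped
  to the inverse image under the operator y |-> P (H y) + y acting on S,
  and P^* is the inclusion of S.\<close>
definition compressed_resolvent :: "'a::real_inner set \<Rightarrow> ('a \<Rightarrow> 'a) \<Rightarrow> 'a \<Rightarrow> 'a" where
  "compressed_resolvent S H x = inv_into S (\<lambda>y. orth_proj S (H y) + y) (orth_proj S x)"

end

theory Submission
  imports Defs
begin

text \<open>Write \<open>u = (H\<^sub>t + 1)\<^sup>-\<^sup>1 x\<close>, split it as \<open>u = P u + q\<close> with \<open>q \<bottom> S\<close>, and let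
  \<open>v = (P H P\<^sup>* + 1)\<^sup>-\<^sup>1 P x\<close>. Pairing the equation \<open>H u + t q + u = x\<close> with \<open>u\<close> and with \<open>q\<close>
  gives \<open>\<parallel>u\<parallel> \<le> \<parallel>x\<parallel>\<close> and \<open>(1 + t) \<parallel>q\<parallel> \<le> \<parallel>x - H u\<parallel> \<le> (1 + N) \<parallel>x\<parallel>\<close>, where \<open>N = \<parallel>H + 1\<parallel> \<ge> 1\<close>
  also bounds \<open>\<parallel>H\<parallel>\<close> because \<open>H \<ge> 0\<close>. Projected onto \<open>S\<close>, the same equation says that \<open>P u\<close> solves
  the compressed equation up to the error \<open>P H q\<close>, so by coercivity \<open>\<parallel>P u - v\<parallel> \<le> N \<parallel>q\<parallel>\<close>. Hence
  \<open>\<parallel>u - v\<parallel> \<le> (N + 1)\<^sup>2 / (1 + t) \<parallel>x\<parallel> \<le> 4 N\<^sup>2 / (1 + t) \<parallel>x\<parallel>\<close>. Both inverses exist because a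
  coercive operator on a closed subspace of a Hilbert space is onto it (Lax--Milgram), which in
  turn rests on the projection theorem, obtained by minimising the distance.\<close>

lemma norm_le_of_norm_square_le_inner:
  fixes w z :: "'a::real_inner"
  assumes "(norm z)\<^sup>2 \<le> inner w z"
  shows "norm z \<le> norm w"
proof -
  have "norm z * norm z \<le> norm w * norm z"
    using assms norm_cauchy_schwarz[of w z] by (simp add: power2_eq_square)
  then show ?thesis
    by (cases "z = 0") (auto simp: mult_le_cancel_right)
qed

lemma norm_le_norm_add_of_inner_nonneg:
  fixes a b :: "'a::real_inner"
  assumes "0 \<le> inner a b"
  shows "norm a \<le> norm (a + b)"
proof -
  have "(norm a)\<^sup>2 \<le> (norm (a + b))\<^sup>2"
    using assms unfolding power2_norm_eq_inner
    by (simp add: inner_add_left inner_add_right inner_commute[of b a])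
  then show ?thesis
    by (rule power2_le_imp_le) simp
qed

lemma orthogonal_of_minimal_distance:
  fixes S :: "'a::real_inner set"
  assumes "subspace S" "y \<in> S" and min: "\<And>z. z \<in> S \<Longrightarrow> norm (x - y) \<le> norm (x - z)"
  shows "x - y \<in> orthogonal_comp S"
  unfolding orthogonal_comp_def orthogonal_def
proof (intro CollectI ballI)
  fix z assume "z \<in> S"
  define a where "a = inner (x - y) z"
  define c where "c = inner z z"
  define s where "s = a / (c + 1)"
  have "c \<ge> 0" unfolding c_def by simp
  then have a: "a = s * (c + 1)" unfolding s_def by simp
  have "y + s *\<^sub>R z \<in> S"
    using assms(1,2) \<open>z \<in> S\<close> by (simp add: subspace_add subspace_scale)
  then have "(norm (x - y))\<^sup>2 \<le> (norm ((x - y) - s *\<^sub>R z))\<^sup>2"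
    using min[of "y + s *\<^sub>R z"] by (simp add: power_mono algebra_simps)
  also have "\<dots> = (norm (x - y))\<^sup>2 - 2 * s * a + s\<^sup>2 * c"
    unfolding power2_norm_eq_inner a_def c_def
    by (simp add: inner_diff_left inner_diff_right inner_commute power2_eq_square algebra_simps)
  finally have "s * s * (c + 2) \<le> 0"
    unfolding a by (simp add: power2_eq_square algebra_simps)
  moreover have "0 \<le> s * s * (c + 2)"
    using \<open>c \<ge> 0\<close> by simp
  ultimately have "s * s * (c + 2) = 0"
    by linarith
  with \<open>c \<ge> 0\<close> have "s = 0"
    by simp
  then show "inner z (x - y) = 0"
    using a by (simp add: a_def inner_commute)
qed

lemma minimizing_sequence_Cauchy:
  fixes S :: "'a::real_inner set"
  assumes "subspace S" and Y: "\<And>n. Y n \<in> S"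
    and d_le: "\<And>z. z \<in> S \<Longrightarrow> d \<le> (norm (x - z))\<^sup>2"
    and close: "\<And>n. (norm (x - Y n))\<^sup>2 < d + 1 / real (Suc n)"
  shows "Cauchy Y"
proof (rule metric_CauchyI)
  have gap: "(norm (Y n - Y m))\<^sup>2 < 2 / real (Suc n) + 2 / real (Suc m)" for n m
  proof -
    have "d \<le> (norm (x - (1/2) *\<^sub>R (Y n + Y m)))\<^sup>2"
      using Y assms(1) by (simp add: subspace_add subspace_scale d_le)
    \<comment> \<open>parallelogram law for \<open>x - Y n\<close> and \<open>x - Y m\<close>\<close>
    moreover have "(norm (Y n - Y m))\<^sup>2 = 2 * (norm (x - Y n))\<^sup>2 + 2 * (norm (x - Y m))\<^sup>2
        - 4 * (norm (x - (1/2) *\<^sub>R (Y n + Y m)))\<^sup>2"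
      unfolding power2_norm_eq_inner
      by (simp add: inner_diff_left inner_diff_right inner_add_left inner_add_right inner_commute algebra_simps)
    ultimately show ?thesis
      using close[of n] close[of m] by linarith
  qed
  fix e :: real assume "e > 0"
  then obtain M where "M > 0" and M: "inverse (real M) < e\<^sup>2 / 4"
    using ex_inverse_of_nat_less[of "e\<^sup>2 / 4"] by auto
  have bound: "2 / real (Suc k) \<le> 2 * inverse (real M)" if "k \<ge> M" for k
    using that \<open>M > 0\<close> by (simp add: inverse_eq_divide frac_le)
  have "dist (Y m) (Y n) < e" if "m \<ge> M" "n \<ge> M" for m n
  proof -
    have "(norm (Y m - Y n))\<^sup>2 < e\<^sup>2"
      using gap[of m n] bound[of m] bound[of n] that M by linarith
    with \<open>e > 0\<close> show ?thesis
      by (simp add: dist_norm power_less_imp_less_base)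
  qed
  then show "\<exists>M. \<forall>m\<ge>M. \<forall>n\<ge>M. dist (Y m) (Y n) < e"
    by blast
qed

lemma orthogonal_projection_exists:
  fixes S :: "'a::{real_inner,complete_space} set"
  assumes "subspace S" "closed S"
  obtains y where "y \<in> S" "x - y \<in> orthogonal_comp S"
proof -
  define d where "d = (INF y\<in>S. (norm (x - y))\<^sup>2)"
  have "S \<noteq> {}"
    using assms(1) subspace_0 by blast
  have bdd: "bdd_below ((\<lambda>y. (norm (x - y))\<^sup>2) ` S)"
    by (rule bdd_belowI2[where m = 0]) simp
  have d_le: "d \<le> (norm (x - z))\<^sup>2" if "z \<in> S" for z
    unfolding d_def by (rule cINF_lower[OF bdd that])
  have "\<exists>y\<in>S. (norm (x - y))\<^sup>2 < d + 1 / real (Suc n)" for n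
    using cINF_less_iff[OF \<open>S \<noteq> {}\<close> bdd, of "d + 1 / real (Suc n)"] unfolding d_def by simp
  then obtain Y where Y: "\<And>n. Y n \<in> S" "\<And>n. (norm (x - Y n))\<^sup>2 < d + 1 / real (Suc n)"
    by metis
  then have "Cauchy Y"
    using assms(1) d_le by (intro minimizing_sequence_Cauchy)
  then obtain y where y: "Y \<longlonglongrightarrow> y"
    using Cauchy_convergent_iff convergent_def by blast
  have "y \<in> S"
    using closed_sequentially[OF assms(2) Y(1) y] .
  have "(\<lambda>n. (norm (x - Y n))\<^sup>2) \<longlonglongrightarrow> (norm (x - y))\<^sup>2"
    by (intro tendsto_intros y)
  moreover have "(\<lambda>n. d + 1 / real (Suc n)) \<longlonglongrightarrow> d"
    using tendsto_add[OF tendsto_const LIMSEQ_inverse_real_of_nat, of d]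
    by (simp add: inverse_eq_divide)
  moreover have "\<exists>N. \<forall>n\<ge>N. (norm (x - Y n))\<^sup>2 \<le> d + 1 / real (Suc n)"
    using Y(2) by (intro exI[of _ 0] allI impI less_imp_le)
  ultimately have "(norm (x - y))\<^sup>2 \<le> d"
    by (rule LIMSEQ_le)
  then have "norm (x - y) \<le> norm (x - z)" if "z \<in> S" for z
    using d_le[OF that] by (rule power2_le_imp_le[OF order_trans]) simp
  then have "x - y \<in> orthogonal_comp S"
    by (rule orthogonal_of_minimal_distance[OF assms(1) \<open>y \<in> S\<close>])
  with \<open>y \<in> S\<close> show ?thesis
    by (rule that)
qed

lemma orth_proj_eqI:
  fixes S :: "'a::real_inner set"
  assumes "subspace S" "y \<in> S" "x - y \<in> orthogonal_comp S"
  shows "orth_proj S x = y"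
  unfolding orth_proj_def
proof (rule the_equality)
  fix y' assume y': "y' \<in> S \<and> x - y' \<in> orthogonal_comp S"
  then have "y' - y \<in> S"
    using assms by (simp add: subspace_diff)
  moreover have "y' - y \<in> orthogonal_comp S"
    using y' assms(3) subspace_diff[OF subspace_orthogonal_comp] by force
  ultimately have "inner (y' - y) (y' - y) = 0"
    unfolding orthogonal_comp_def orthogonal_def by blast
  then show "y' = y"
    by simp
qed (use assms in blast)

context
  fixes S :: "'a::{real_inner,complete_space} set"
  assumes S: "subspace S" "closed S"
begin

lemma orth_proj_in: "orth_proj S x \<in> S"
  and orth_proj_orthogonal: "x - orth_proj S x \<in> orthogonal_comp S"
proof -
  obtain y where "y \<in> S" "x - y \<in> orthogonal_comp S"
    using orthogonal_projection_exists[OF S] .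
  moreover have "orth_proj S x = y"
    using orth_proj_eqI[OF S(1) calculation] .
  ultimately show "orth_proj S x \<in> S" "x - orth_proj S x \<in> orthogonal_comp S"
    by simp_all
qed

lemma inner_orth_proj: "z \<in> S \<Longrightarrow> inner (orth_proj S x) z = inner x z"
  using orth_proj_orthogonal[of x]
  by (auto simp: orthogonal_comp_def orthogonal_def inner_diff_right inner_commute)

lemma inner_orth_proj_residual:
  "inner (x - orth_proj S x) x = (norm (x - orth_proj S x))\<^sup>2"
  using inner_orth_proj[OF orth_proj_in, of x x]
  by (simp add: power2_norm_eq_inner inner_diff_left inner_diff_right inner_commute)

lemma linear_orth_proj: "linear (orth_proj S)"
proof
  fix x y
  show "orth_proj S (x + y) = orth_proj S x + orth_proj S y"
  proof (rule orth_proj_eqI[OF S(1)])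
    show "orth_proj S x + orth_proj S y \<in> S"
      using S(1) orth_proj_in orth_proj_in by (rule subspace_add)
    show "x + y - (orth_proj S x + orth_proj S y) \<in> orthogonal_comp S"
      unfolding add_diff_add using subspace_orthogonal_comp orth_proj_orthogonal orth_proj_orthogonal
      by (rule subspace_add)
  qed
next
  fix r x
  show "orth_proj S (r *\<^sub>R x) = r *\<^sub>R orth_proj S x"
  proof (rule orth_proj_eqI[OF S(1)])
    show "r *\<^sub>R orth_proj S x \<in> S"
      using S(1) orth_proj_in by (rule subspace_scale)
    show "r *\<^sub>R x - r *\<^sub>R orth_proj S x \<in> orthogonal_comp S"
      unfolding scaleR_diff_right[symmetric] using subspace_orthogonal_comp orth_proj_orthogonal
      by (rule subspace_scale)
  qed
qed

lemma norm_orth_proj_le: "norm (orth_proj S x) \<le> norm x"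
  using inner_orth_proj[OF orth_proj_in, of x x]
  by (intro norm_le_of_norm_square_le_inner) (simp add: power2_norm_eq_inner inner_commute)

lemma bounded_linear_orth_proj: "bounded_linear (orth_proj S)"
  using linear_orth_proj norm_orth_proj_le
  by (auto intro!: bounded_linear_intro[of _ 1] simp: linear_add linear_scale)

lemma orth_proj_orthogonal_comp: "orth_proj (orthogonal_comp S) x = x - orth_proj S x"
  using orth_proj_in[of x] orthogonal_comp_subset[of S] orth_proj_orthogonal[of x]
  by (intro orth_proj_eqI[OF subspace_orthogonal_comp]) auto

end

lemma coercive_image_eq:
  fixes g :: "'a::{real_inner,complete_space} \<Rightarrow> 'a"
  assumes T: "subspace T" "closed T" and g: "bounded_linear g" "g ` T \<subseteq> T"
    and coercive: "\<And>y. y \<in> T \<Longrightarrow> (norm y)\<^sup>2 \<le> inner (g y) y"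
  shows "g ` T = T"
proof
  have "complete (g ` T)"
    using coercive norm_le_of_norm_square_le_inner T
    by (intro complete_isometric_image[of 1 T g, OF _ T(1) g(1)]) (auto simp: complete_eq_closed)
  then have "closed (g ` T)"
    by (simp add: complete_eq_closed)
  moreover have "subspace (g ` T)"
    using T(1) bounded_linear.linear[OF g(1)] by (rule linear_subspace_image[rotated])
  show "T \<subseteq> g ` T"
  proof
    fix w assume "w \<in> T"
    obtain p where p: "p \<in> g ` T" "w - p \<in> orthogonal_comp (g ` T)"
      using orthogonal_projection_exists[OF \<open>subspace (g ` T)\<close> \<open>closed (g ` T)\<close>] by blast
    have "w - p \<in> T"
      using \<open>w \<in> T\<close> p(1) g(2) T(1) by (auto intro: subspace_diff)
    then have "inner (g (w - p)) (w - p) = 0"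
      using p(2) by (auto simp: orthogonal_comp_def orthogonal_def)
    then have "w = p"
      using coercive[OF \<open>w - p \<in> T\<close>] by simp
    with p(1) show "w \<in> g ` T"
      by simp
  qed
qed (use g(2) in blast)

lemma norm_penalty_component_le:
  fixes S :: "'a::{real_inner,complete_space} set"
  assumes S: "subspace S" "closed S"
    and H: "\<And>z. 0 \<le> inner (H z) z" "\<And>z. norm (H z) \<le> N * norm z"
    and "0 \<le> N" "0 \<le> t"
    and u: "H u + t *\<^sub>R (u - orth_proj S u) + u = x"
  shows "norm (u - orth_proj S u) \<le> (N + 1) / (1 + t) * norm x"
proof -
  define q where "q = u - orth_proj S u"
  have qq: "inner q u = (norm q)\<^sup>2"
    unfolding q_def by (rule inner_orth_proj_residual[OF S])
  have "inner x u = inner (H u) u + t * (norm q)\<^sup>2 + (norm u)\<^sup>2"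
    using qq unfolding u[symmetric] q_def[symmetric] by (simp add: inner_add_left power2_norm_eq_inner)
  then have "norm u \<le> norm x"
    using H(1)[of u] \<open>0 \<le> t\<close> by (intro norm_le_of_norm_square_le_inner) simp
  have "norm q \<le> norm ((1 / (1 + t)) *\<^sub>R (x - H u))"
  proof (rule norm_le_of_norm_square_le_inner)
    have "(1 + t) * (norm q)\<^sup>2 = inner (x - H u) q"
      using qq unfolding u[symmetric] q_def[symmetric]
      by (simp add: inner_commute power2_norm_eq_inner algebra_simps)
    then show "(norm q)\<^sup>2 \<le> inner ((1 / (1 + t)) *\<^sub>R (x - H u)) q"
      unfolding inner_scaleR_left using \<open>0 \<le> t\<close> by (simp flip: \<open>(1 + t) * (norm q)\<^sup>2 = _\<close>)
  qed
  also have "\<dots> = norm (x - H u) / (1 + t)"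
    using \<open>0 \<le> t\<close> by simp
  also have "\<dots> \<le> (N + 1) * norm x / (1 + t)"
  proof (rule divide_right_mono)
    have "norm (H u) \<le> N * norm x"
      using H(2)[of u] \<open>norm u \<le> norm x\<close> \<open>0 \<le> N\<close> by (meson mult_left_mono order_trans)
    then show "norm (x - H u) \<le> (N + 1) * norm x"
      using norm_triangle_ineq4[of x "H u"] by (simp add: algebra_simps)
  qed (use \<open>0 \<le> t\<close> in simp)
  finally show ?thesis
    unfolding q_def by simp
qed

lemma penalized_resolvent_estimate:
  fixes S :: "'a::{real_inner,complete_space} set"
  assumes S: "subspace S" "closed S"
    and H: "linear H" "\<And>z. 0 \<le> inner (H z) z" "\<And>z. norm (H z) \<le> N * norm z"
    and "0 \<le> N" "0 \<le> t"
    and u: "H u + t *\<^sub>R (u - orth_proj S u) + u = x"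
    and v: "v \<in> S" "orth_proj S (H v) + v = orth_proj S x"
  shows "norm (u - v) \<le> (N + 1)\<^sup>2 / (1 + t) * norm x"
proof -
  interpret H: linear H by fact
  define q where "q = u - orth_proj S u"
  define r where "r = orth_proj S u - v"
  have "r \<in> S"
    unfolding r_def using S(1) orth_proj_in[OF S] v(1) by (rule subspace_diff)
  then have qr: "inner q r = 0"
    unfolding q_def using orth_proj_orthogonal[OF S] by (auto simp: orthogonal_comp_def orthogonal_def inner_commute)
  \<comment> \<open>both \<open>orth_proj S u\<close> and \<open>v\<close> solve the compressed equation, up to an error \<open>H q\<close>\<close>
  have "norm r \<le> norm (- H q)"
  proof (rule norm_le_of_norm_square_le_inner)
    have "inner (H v + v) r = inner x r"
      using inner_orth_proj[OF S \<open>r \<in> S\<close>, of "H v"] inner_orth_proj[OF S \<open>r \<in> S\<close>, of x] v(2)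
      by (metis inner_add_left)
    moreover have "H r + r = (x - t *\<^sub>R q - H q - q) - (H v + v)"
      using u unfolding r_def q_def by (simp add: H.diff algebra_simps)
    ultimately have "inner (H r + r) r = - inner (H q) r"
      using qr by (simp add: inner_diff_left)
    then show "(norm r)\<^sup>2 \<le> inner (- H q) r"
      using H(2)[of r] by (simp add: inner_add_left power2_norm_eq_inner)
  qed
  then have "norm r \<le> N * norm q"
    using H(3)[of q] by simp
  have "norm (u - v) \<le> norm r + norm q"
    using norm_triangle_ineq[of r q] by (simp add: r_def q_def)
  also have "\<dots> \<le> (N + 1) * norm q"
    using \<open>norm r \<le> N * norm q\<close> by (simp add: algebra_simps)
  also have "\<dots> \<le> (N + 1) * ((N + 1) / (1 + t) * norm x)"
    using norm_penalty_component_le[OF S H(2,3) \<open>0 \<le> N\<close> \<open>0 \<le> t\<close> u] \<open>0 \<le> N\<close>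
    unfolding q_def by (intro mult_left_mono) auto
  finally show ?thesis
    by (simp add: power2_eq_square)
qed

lemma norm_le_onorm_add_id:
  fixes H :: "'a::real_inner \<Rightarrow> 'a"
  assumes "bounded_linear H" "\<And>x. 0 \<le> inner (H x) x"
  shows "norm (H z) \<le> onorm (\<lambda>x. H x + x) * norm z"
proof -
  have "norm (H z) \<le> norm (H z + z)"
    using assms(2) by (rule norm_le_norm_add_of_inner_nonneg)
  also have "\<dots> \<le> onorm (\<lambda>x. H x + x) * norm z"
    using assms(1) by (intro onorm bounded_linear_add bounded_linear_ident)
  finally show ?thesis .
qed

lemma one_le_onorm_add_id:
  fixes H :: "'a::real_inner \<Rightarrow> 'a" and e :: 'a
  assumes "bounded_linear H" "\<And>x. 0 \<le> inner (H x) x" and "e \<noteq> 0"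
  shows "1 \<le> onorm (\<lambda>x. H x + x)"
proof -
  have "norm e \<le> norm (e + H e)"
    using assms(2) by (intro norm_le_norm_add_of_inner_nonneg) (simp add: inner_commute)
  also have "\<dots> \<le> onorm (\<lambda>x. H x + x) * norm e"
    using assms(1) onorm[of "\<lambda>x. H x + x" e] by (simp add: add.commute bounded_linear_add)
  finally show ?thesis
    using \<open>e \<noteq> 0\<close> by simp
qed

lemma surj_penalized_operator:
  fixes S :: "'a::{real_inner,complete_space} set"
  assumes S: "subspace S" "closed S"
    and H: "bounded_linear H" "\<And>z. 0 \<le> inner (H z) z" and "0 \<le> t"
  shows "surj (\<lambda>z. H z + t *\<^sub>R (z - orth_proj S z) + z)"
proof (rule coercive_image_eq[OF subspace_UNIV closed_UNIV])
  show "bounded_linear (\<lambda>z. H z + t *\<^sub>R (z - orth_proj S z) + z)"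
    using H(1) bounded_linear_orth_proj[OF S]
    by (intro bounded_linear_add bounded_linear_const_scaleR bounded_linear_sub bounded_linear_ident)
  fix z :: 'a
  have "inner (H z + t *\<^sub>R (z - orth_proj S z) + z) z
      = inner (H z) z + t * (norm (z - orth_proj S z))\<^sup>2 + (norm z)\<^sup>2"
    by (simp add: inner_add_left inner_orth_proj_residual[OF S] power2_norm_eq_inner)
  then show "(norm z)\<^sup>2 \<le> inner (H z + t *\<^sub>R (z - orth_proj S z) + z) z"
    using H(2)[of z] \<open>0 \<le> t\<close> by simp
qed simp

lemma compressed_operator_image:
  fixes S :: "'a::{real_inner,complete_space} set"
  assumes S: "subspace S" "closed S"
    and H: "bounded_linear H" "\<And>z. 0 \<le> inner (H z) z"
  shows "(\<lambda>y. orth_proj S (H y) + y) ` S = S"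
proof (rule coercive_image_eq[OF S])
  show "bounded_linear (\<lambda>y. orth_proj S (H y) + y)"
    using bounded_linear_compose[OF bounded_linear_orth_proj[OF S] H(1)]
    by (intro bounded_linear_add bounded_linear_ident) (simp add: o_def)
  show "(\<lambda>y. orth_proj S (H y) + y) ` S \<subseteq> S"
    using S(1) orth_proj_in[OF S] by (auto intro: subspace_add)
  fix y assume "y \<in> S"
  then show "(norm y)\<^sup>2 \<le> inner (orth_proj S (H y) + y) y"
    using H(2)[of y] by (simp add: inner_add_left inner_orth_proj[OF S] power2_norm_eq_inner)
qed

lemma norm_penalized_resolvent_sub_compressed_resolvent:
  fixes S :: "'a::{real_inner,complete_space} set"
  assumes S: "subspace S" "closed S"
    and H: "bounded_linear H" "\<And>z. 0 \<le> inner (H z) z" and "0 \<le> t"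
  shows "norm (inv (\<lambda>z. H z + t *\<^sub>R (z - orth_proj S z) + z) x - compressed_resolvent S H x)
    \<le> (onorm (\<lambda>x. H x + x) + 1)\<^sup>2 / (1 + t) * norm x"
proof -
  define v where "v = compressed_resolvent S H x"
  have "orth_proj S x \<in> (\<lambda>y. orth_proj S (H y) + y) ` S"
    using compressed_operator_image[OF S H] orth_proj_in[OF S] by simp
  then have "v \<in> S" "orth_proj S (H v) + v = orth_proj S x"
    unfolding v_def compressed_resolvent_def by (rule inv_into_into, rule f_inv_into_f)
  moreover have "0 \<le> onorm (\<lambda>x. H x + x)"
    using H(1) by (intro onorm_pos_le bounded_linear_add bounded_linear_ident)
  ultimately show ?thesis
    unfolding v_def[symmetric]
    using S H \<open>0 \<le> t\<close> surj_f_inv_f[OF surj_penalized_operator[OF S H \<open>0 \<le> t\<close>]]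
    by (intro penalized_resolvent_estimate) (auto simp: norm_le_onorm_add_id bounded_linear.linear)
qed

theorem proposition4p2:
  fixes S :: "'a::{real_inner, complete_space} set"
    and H :: "'a \<Rightarrow> 'a"
    and t :: real
  assumes "subspace S" and "closed S"
    and "S \<noteq> {0}" and "S \<noteq> UNIV"
    and "bounded_linear H"
    and "\<And>x y. inner (H x) y = inner x (H y)"
    and "\<And>x. inner (H x) x \<ge> 0"
    and "t \<ge> 2 * (onorm (\<lambda>x. H x + x))\<^sup>2"
  shows "onorm (\<lambda>x. inv (\<lambda>z. H z + t *\<^sub>R orth_proj (orthogonal_comp S) z + z) x
                   - compressed_resolvent S H x)
         \<le> 4 * (onorm (\<lambda>x. H x + x))\<^sup>2 / (1 + t)"
proof -
  define N where "N = onorm (\<lambda>x. H x + x)"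
  have "0 \<le> t"
    using assms(8) zero_le_power2[of N] unfolding N_def by linarith
  obtain e where "e \<in> S" "e \<noteq> 0"
    using assms(1,3) subspace_0 by blast
  then have "1 \<le> N"
    unfolding N_def using assms(5,7) by (intro one_le_onorm_add_id)
  then have "(N + 1)\<^sup>2 / (1 + t) \<le> 4 * N\<^sup>2 / (1 + t)"
    using power_mono[of "N + 1" "2 * N" 2] \<open>0 \<le> t\<close> by (intro divide_right_mono) auto
  then have "norm (inv (\<lambda>z. H z + t *\<^sub>R (z - orth_proj S z) + z) x - compressed_resolvent S H x)
      \<le> 4 * N\<^sup>2 / (1 + t) * norm x" for x
    using norm_penalized_resolvent_sub_compressed_resolvent[OF assms(1,2,5,7) \<open>0 \<le> t\<close>, of x]
    unfolding N_def[symmetric] by (meson mult_right_mono norm_ge_zero order_trans)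
  then show ?thesis
    unfolding N_def orth_proj_orthogonal_comp[OF assms(1,2)]
    using \<open>0 \<le> t\<close> by (intro onorm_bound) auto
qed

end
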